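(* Let $d\ge 0$ be an integer. There exist an instance domain $\mathcal{X}$ and a hypothesis class $\mathcal{H}$ with Littlestone dimension $\mathrm{Ldim}(\mathcal{H})=d<\infty$ such that the following holds for all integers $k,l\ge 0$: if $k<l+d$, then for any integer $m\ge 0$ there exists a strategy of the adversary, all of whose presented sequences satisfy the $l$-bias assumption with respect to $\mathcal{H}$, that forces any deterministic learning algorithm guaranteeing at most $k$ mistakes (on all sequences satisfying the $l$-bias assumption with respect to $\mathcal{H}$) to have at least $m+1$ nontrivial rounds.
   Context: Online classification with abstention: at each round $t$ the adversary presents $x_t\in\mathcal{X}$, the learner predicts $\hat y_t\in\{-1,+1,\bot\}$ ($\bot$ = abstain), then the adversary reveals $y_t\in\{-1,+1\}$. A mistake is a round with $\hat y_t=-y_t$; a round is nontrivial if the learner makes a mistake or abstains. A deterministic learner's prediction is a deterministic function of the past labeled examples and the current example; the adversary may act adaptively. Hypotheses are maps $\mathcal{X}\to\{-1,+1\}$. For classes, $\mathcal{H}_1\cdot\mathcal{H}_2=\{x\mapsto h_1(x)h_2(x):h_i\in\mathcal{H}_i\}$. $\mathcal{C}^l$ is the class of functions $x\mapsto 1-2I(x\in D)$ for $D\subseteq\mathcal{X}$, $|D|\le l$, and $\mathcal{H}^l=\mathcal{H}\cdot\mathcal{C}^l$. A sequence $(x_1,y_1),\dots,(x_n,y_n)$ satisfies the $l$-bias assumption w.r.t. $\mathcal{H}$ if some $h\in\mathcal{H}^l$ has $h(x_t)=y_t$ for all $t$. The Littlestone dimension $\mathrm{Ldim}(\mathcal{H})$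 is the largest $d$ such that there is a complete binary tree of depth $d$ whose internal nodes are labeled by points of $\mathcal{X}$ such that for every root-to-leaf path (going left means label $-1$, right means $+1$) some $h\in\mathcal{H}$ agrees with all labels along the path. *)

theory Defs
  imports Main
begin

text \<open>Labels are the integers -1 and +1. A prediction is an
int option: None is abstention, Some y a label prediction.
A hypothesis is a function nat to int; only its values on X matter.\<close>

type_synonym hyp = "nat \<Rightarrow> int"
type_synonym labeled_seq = "(nat \<times> int) list"
type_synonym learner = "labeled_seq \<Rightarrow> nat \<Rightarrow> int option"
type_synonym history = "(nat \<times> int option \<times> int) list"
type_synonym adv_x = "history \<Rightarrow> nat option"
type_synonym adv_y = "history \<Rightarrow> nat \<Rightarrow> int option \<Rightarrow> int"

definition hyp_class :: "nat set \<Rightarrow> hyp set \<Rightarrow> bool" where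
  "hyp_class X H \<longleftrightarrow> (\<forall>h\<in>H. \<forall>x\<in>X. h x \<in> {-1, 1})"

definition class_mult :: "hyp set \<Rightarrow> hyp set \<Rightarrow> hyp set" where
  "class_mult H1 H2 = {f. \<exists>h1\<in>H1. \<exists>h2\<in>H2. f = (\<lambda>x. h1 x * h2 x)}"

definition corr_class :: "nat set \<Rightarrow> nat \<Rightarrow> hyp set" where
  "corr_class X l = {f. \<exists>D. D \<subseteq> X \<and> finite D \<and> card D \<le> l \<and>
      f = (\<lambda>x. 1 - 2 * (if x \<in> D then 1 else 0))}"

definition biased_class :: "nat set \<Rightarrow> hyp set \<Rightarrow> nat \<Rightarrow> hyp set" where
  "biased_class X H l = class_mult H (corr_class X l)"

definition l_bias :: "nat set \<Rightarrow> hyp set \<Rightarrow> nat \<Rightarrow> labeled_seq \<Rightarrow> bool" where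
  "l_bias X H l s \<longleftrightarrow> (\<exists>h\<in>biased_class X H l. \<forall>t<length s. h (fst (s ! t)) = snd (s ! t))"

text \<open>Littlestone trees: a complete binary tree of depth d is a labeling T of all
label-prefixes (lists over {-1,1}) of length < d by points of X; the node reached after
the labels p is T p.\<close>
definition shatters_tree :: "nat set \<Rightarrow> hyp set \<Rightarrow> nat \<Rightarrow> bool" where
  "shatters_tree X H d \<longleftrightarrow> (\<exists>T :: int list \<Rightarrow> nat.
      (\<forall>p. length p < d \<and> set p \<subseteq> {-1, 1} \<longrightarrow> T p \<in> X) \<and>
      (\<forall>ys. length ys = d \<and> set ys \<subseteq> {-1, 1} \<longrightarrow>
          (\<exists>h\<in>H. \<forall>i<d. h (T (take i ys)) = ys ! i)))"

definition ldim_eq :: "nat set \<Rightarrow> hyp set \<Rightarrow> nat \<Rightarrow> bool" where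
  "ldim_eq X H d \<longleftrightarrow> shatters_tree X H d \<and> (\<forall>d'. shatters_tree X H d' \<longrightarrow> d' \<le> d)"

definition valid_learner :: "learner \<Rightarrow> bool" where
  "valid_learner L \<longleftrightarrow> (\<forall>s x. L s x \<in> {None, Some (-1), Some 1})"

definition mistakes :: "learner \<Rightarrow> labeled_seq \<Rightarrow> nat" where
  "mistakes L s = card {t. t < length s \<and> L (take t s) (fst (s ! t)) = Some (- snd (s ! t))}"

definition guarantees :: "nat set \<Rightarrow> hyp set \<Rightarrow> nat \<Rightarrow> nat \<Rightarrow> learner \<Rightarrow> bool" where
  "guarantees X H l k L \<longleftrightarrow> (\<forall>s. (\<forall>t<length s. fst (s ! t) \<in> X) \<and> l_bias X H l s \<longrightarrow> mistakes L s \<le> k)"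

definition labels_of :: "history \<Rightarrow> labeled_seq" where
  "labels_of h = map (\<lambda>(x, p, y). (x, y)) h"

text \<open>The interaction of an adaptive adversary (ax presents the next point or stops with None;
ay reveals the label after seeing the prediction) with a deterministic learner, after n steps.\<close>
fun play :: "adv_x \<Rightarrow> adv_y \<Rightarrow> learner \<Rightarrow> nat \<Rightarrow> history" where
  "play ax ay L 0 = []"
| "play ax ay L (Suc n) = (let h = play ax ay L n in
     (case ax h of None \<Rightarrow> h
      | Some x \<Rightarrow> (let p = L (labels_of h) x in h @ [(x, p, ay h x p)])))"

definition nontrivial_rounds :: "history \<Rightarrow> nat" where
  "nontrivial_rounds h = card {t. t < length h \<and>
      (fst (snd (h ! t)) = Some (- snd (snd (h ! t))) \<or> fst (snd (h ! t)) = None)}"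

end

theory Submission
  imports Defs
begin

text \<open>Take H = C^d on the infinite domain of naturals. Its Littlestone dimension is d: the
all-negative path of a shattered tree of depth d' consists of d' distinct nodes, all of which
must be among the at most d flipped points. Moreover H^l contains every function that is
negative on at most d + l points. The adversary presents fresh points and answers every
prediction by +1, except that a prediction +1 is refuted by the label -1 as long as fewer than
d + l labels -1 have been given. Every sequence produced is then consistent with H^l, and every
label -1 is a mistake; hence a learner that makes at most k < d + l mistakes never exhausts the
budget, so each of its predictions is wrong or an abstention and every round is nontrivial.\<close>

definition sign_flip :: "nat set \<Rightarrow> hyp" where
  "sign_flip D x = (if x \<in> D then -1 else 1)"

lemma corr_class_eq_image:
  "corr_class X l = sign_flip ` {D. D \<subseteq> X \<and> finite D \<and> card D \<le> l}"
proof -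
  have "(\<lambda>x. 1 - 2 * (if x \<in> D then 1 else 0)) = sign_flip D" for D
    by (simp add: sign_flip_def fun_eq_iff)
  then show ?thesis unfolding corr_class_def by auto
qed

lemma hyp_class_corr_class: "hyp_class X (corr_class X l)"
  by (auto simp: hyp_class_def corr_class_eq_image sign_flip_def)

lemma sign_flip_Un:
  "D1 \<inter> D2 = {} \<Longrightarrow> sign_flip (D1 \<union> D2) = (\<lambda>x. sign_flip D1 x * sign_flip D2 x)"
  by (auto simp: sign_flip_def fun_eq_iff)

lemma sign_flip_in_biased_class:
  assumes "N \<subseteq> X" "finite N" "card N \<le> d + l"
  shows "sign_flip N \<in> biased_class X (corr_class X d) l"
proof -
  obtain D1 where D1: "D1 \<subseteq> N" "card D1 = min d (card N)"
    using obtain_subset_with_card_n[of "min d (card N)" N] by auto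
  have fin: "finite D1" "finite (N - D1)" using D1(1) assms(2) finite_subset by auto
  have "card (N - D1) \<le> l" using D1 assms(2,3) fin by (simp add: card_Diff_subset)
  moreover have "sign_flip N = (\<lambda>x. sign_flip D1 x * sign_flip (N - D1) x)"
    using sign_flip_Un[of D1 "N - D1"] D1(1) by (simp add: Un_absorb1)
  moreover have "D1 \<subseteq> X" "N - D1 \<subseteq> X" "card D1 \<le> d" using D1 assms(1) by auto
  ultimately show ?thesis
    using fin unfolding biased_class_def class_mult_def corr_class_eq_image by blast
qed

lemma shatters_tree_corr_class:
  assumes "{..<d} \<subseteq> X"
  shows "shatters_tree X (corr_class X d) d"
  unfolding shatters_tree_def
proof (intro exI[of _ length] conjI allI impI)
  fix p :: "int list" assume "length p < d \<and> set p \<subseteq> {-1, 1}"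
  then show "length p \<in> X" using assms by auto
next
  fix ys :: "int list" assume ys: "length ys = d \<and> set ys \<subseteq> {-1, 1}"
  define D where "D = {i. i < d \<and> ys ! i = -1}"
  have "D \<subseteq> {..<d}" by (auto simp: D_def)
  then have "D \<subseteq> X" "finite D" "card D \<le> d"
    using assms card_mono[of "{..<d}" D] finite_subset by auto
  then have "sign_flip D \<in> corr_class X d" unfolding corr_class_eq_image by blast
  moreover have "ys ! i \<in> {-1, 1}" if "i < d" for i
    using ys that nth_mem by blast
  then have "\<forall>i<d. sign_flip D (length (take i ys)) = ys ! i"
    using ys by (auto simp: sign_flip_def D_def)
  ultimately show "\<exists>h\<in>corr_class X d. \<forall>i<d. h (length (take i ys)) = ys ! i" by blast
qed

text \<open>Two nodes on one root-to-leaf path of a shattered tree differ, since the path turning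
right at the deeper node is realised as well.\<close>

lemma shattered_tree_left_path_inj:
  assumes T: "\<forall>ys. length ys = n \<and> set ys \<subseteq> {-1, 1} \<longrightarrow>
      (\<exists>h\<in>H. \<forall>i<n. h (T (take i ys)) = ys ! i)"
  shows "inj_on (\<lambda>i. T (replicate i (-1::int))) {..<n}"
proof -
  have distinct: "T (replicate i (-1)) \<noteq> T (replicate j (-1))" if "i < j" "j < n" for i j
  proof
    define zs where "zs = replicate j (-1::int) @ 1 # replicate (n - j - 1) (-1)"
    have "length zs = n \<and> set zs \<subseteq> {-1, 1}" using that by (auto simp: zs_def)
    then obtain h where h: "\<forall>i<n. h (T (take i zs)) = zs ! i" using T by blast
    have "h (T (replicate i (-1))) = -1"
      using h[rule_format, of i] that by (simp add: zs_def nth_append)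
    moreover have "h (T (replicate j (-1))) = 1"
      using h[rule_format, of j] that by (simp add: zs_def nth_append)
    moreover assume "T (replicate i (-1)) = T (replicate j (-1))"
    ultimately show False by simp
  qed
  show ?thesis
    by (rule inj_onI) (metis distinct lessThan_iff linorder_neqE_nat)
qed

lemma shatters_tree_corr_class_le:
  assumes "shatters_tree X (corr_class X d) n"
  shows "n \<le> d"
proof -
  obtain T where T: "\<forall>ys. length ys = n \<and> set ys \<subseteq> {-1, 1} \<longrightarrow>
      (\<exists>h\<in>corr_class X d. \<forall>i<n. h (T (take i ys)) = ys ! i)"
    using assms unfolding shatters_tree_def by blast
  have "length (replicate n (-1::int)) = n \<and> set (replicate n (-1::int)) \<subseteq> {-1, 1}"
    by (simp add: set_replicate_conv_if)
  then obtain h where "h \<in> corr_class X d"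
    and h: "\<forall>i<n. h (T (take i (replicate n (-1)))) = replicate n (-1::int) ! i"
    using T by blast
  then obtain D where D: "finite D" "card D \<le> d" and "h = sign_flip D"
    unfolding corr_class_eq_image by blast
  with h have path: "\<forall>i<n. sign_flip D (T (replicate i (-1))) = -1"
    by (simp add: take_replicate)
  have "(\<lambda>i. T (replicate i (-1::int))) ` {..<n} \<subseteq> D"
    using path by (auto simp: sign_flip_def split: if_splits)
  then have "card ((\<lambda>i. T (replicate i (-1::int))) ` {..<n}) \<le> card D"
    using D(1) by (rule card_mono[rotated])
  then show ?thesis
    using D(2) card_image[OF shattered_tree_left_path_inj[OF T]] by simp
qed

lemma ldim_eq_corr_class: "ldim_eq UNIV (corr_class UNIV d) d"
  unfolding ldim_eq_def
  using shatters_tree_corr_class[of d UNIV] shatters_tree_corr_class_le by blast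

definition fresh_points :: adv_x where
  "fresh_points h = Some (length h)"

lemma length_play_fresh_points [simp]: "length (play fresh_points ay L n) = n"
  by (induction n) (simp_all add: fresh_points_def Let_def)

lemma play_fresh_points_Suc:
  "play fresh_points ay L (Suc n) =
     (let h = play fresh_points ay L n; p = L (labels_of h) n in h @ [(n, p, ay h n p)])"
  by (simp add: fresh_points_def Let_def)

declare play.simps(2) [simp del]

lemma take_play_fresh_points:
  "t \<le> n \<Longrightarrow> take t (play fresh_points ay L n) = play fresh_points ay L t"
  by (induction n) (auto simp: play_fresh_points_Suc Let_def le_Suc_eq)

lemma nth_play_fresh_points:
  assumes "t < n"
  shows "play fresh_points ay L n ! t =
    (let h = play fresh_points ay L t; p = L (labels_of h) t in (t, p, ay h t p))"
proof -
  have "play fresh_points ay L n ! t = take (Suc t) (play fresh_points ay L n) ! t"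
    by simp
  also have "\<dots> = play fresh_points ay L (Suc t) ! t"
    using assms by (simp add: take_play_fresh_points del: take_Suc nth_take)
  finally show ?thesis
    by (simp add: play_fresh_points_Suc Let_def nth_append)
qed

lemma length_labels_of [simp]: "length (labels_of h) = length h"
  by (simp add: labels_of_def)

lemma nth_labels_of: "t < length h \<Longrightarrow> labels_of h ! t = (fst (h ! t), snd (snd (h ! t)))"
  by (simp add: labels_of_def split: prod.splits)

lemma take_labels_of: "take t (labels_of h) = labels_of (take t h)"
  by (simp add: labels_of_def take_map)

definition neg_rounds :: "history \<Rightarrow> nat set" where
  "neg_rounds h = {t. t < length h \<and> snd (snd (h ! t)) = -1}"

lemma finite_neg_rounds [simp]: "finite (neg_rounds h)"
  by (simp add: neg_rounds_def)

lemma neg_rounds_snoc: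
  "neg_rounds (h @ [(x, p, y)]) = neg_rounds h \<union> (if y = -1 then {length h} else {})"
  by (auto simp: neg_rounds_def nth_append less_Suc_eq)

definition refute_positive :: "nat \<Rightarrow> adv_y" where
  "refute_positive B h x p = (if p = Some 1 \<and> card (neg_rounds h) < B then -1 else 1)"

lemma card_neg_rounds_play_le:
  "card (neg_rounds (play fresh_points (refute_positive B) L n)) \<le> B"
  by (induction n)
    (auto simp: play_fresh_points_Suc Let_def neg_rounds_snoc refute_positive_def
      neg_rounds_def[of "[]"] card_insert_if)

lemma labels_of_play_fresh_points:
  assumes "\<And>h x p. ay h x p \<in> {-1, 1}" and "t < n"
  shows "labels_of (play fresh_points ay L n) ! t =
    (t, sign_flip (neg_rounds (play fresh_points ay L n)) t)"
  using assms(1)[of _ t] assms(2)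
  by (auto simp: nth_labels_of nth_play_fresh_points Let_def sign_flip_def neg_rounds_def)

lemma l_bias_play_refute_positive:
  "l_bias UNIV (corr_class UNIV d) l (labels_of (play fresh_points (refute_positive (d + l)) L n))"
proof -
  let ?P = "play fresh_points (refute_positive (d + l)) L n"
  have "sign_flip (neg_rounds ?P) \<in> biased_class UNIV (corr_class UNIV d) l"
    using card_neg_rounds_play_le by (intro sign_flip_in_biased_class) (auto simp: neg_rounds_def)
  moreover have "refute_positive (d + l) h x p \<in> {-1, 1}" for h x p
    by (simp add: refute_positive_def)
  then have "\<forall>t<length (labels_of ?P).
      sign_flip (neg_rounds ?P) (fst (labels_of ?P ! t)) = snd (labels_of ?P ! t)"
    using labels_of_play_fresh_points by fastforce
  ultimately show ?thesis unfolding l_bias_def by blast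
qed

lemma card_neg_rounds_le_mistakes:
  "card (neg_rounds (play fresh_points (refute_positive B) L n))
     \<le> mistakes L (labels_of (play fresh_points (refute_positive B) L n))"
  unfolding mistakes_def
proof (rule card_mono)
  let ?P = "play fresh_points (refute_positive B) L n"
  show "neg_rounds ?P \<subseteq>
    {t. t < length (labels_of ?P) \<and>
      L (take t (labels_of ?P)) (fst (labels_of ?P ! t)) = Some (- snd (labels_of ?P ! t))}"
  proof safe
    fix t assume "t \<in> neg_rounds ?P"
    then have "t < n" and neg: "refute_positive B (play fresh_points (refute_positive B) L t) t
        (L (labels_of (play fresh_points (refute_positive B) L t)) t) = -1"
      by (auto simp: neg_rounds_def nth_play_fresh_points Let_def)
    then show "t < length (labels_of ?P)" by simp
    have "L (labels_of (play fresh_points (refute_positive B) L t)) t = Some 1"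
      using neg by (simp add: refute_positive_def split: if_splits)
    then show "L (take t (labels_of ?P)) (fst (labels_of ?P ! t)) = Some (- snd (labels_of ?P ! t))"
      using \<open>t < n\<close> neg
      by (simp add: take_labels_of take_play_fresh_points nth_labels_of nth_play_fresh_points
          Let_def)
  qed
qed simp

lemma nontrivial_rounds_play_refute_positive:
  assumes "valid_learner L"
    and few_mistakes: "\<And>n. mistakes L (labels_of (play fresh_points (refute_positive B) L n)) < B"
  shows "nontrivial_rounds (play fresh_points (refute_positive B) L n) = n"
proof -
  let ?P = "play fresh_points (refute_positive B) L"
  have nontrivial:
    "fst (snd (?P n ! t)) = Some (- snd (snd (?P n ! t))) \<or> fst (snd (?P n ! t)) = None"
    if "t < n" for t
  proof -
    define p where "p = L (labels_of (?P t)) t"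
    have "card (neg_rounds (?P t)) \<le> mistakes L (labels_of (?P t))"
      by (rule card_neg_rounds_le_mistakes)
    also have "\<dots> < B" by (rule few_mistakes)
    finally have "?P n ! t = (t, p, if p = Some 1 then -1 else 1)"
      using \<open>t < n\<close> by (simp add: nth_play_fresh_points p_def refute_positive_def Let_def)
    moreover have "p \<in> {None, Some (-1), Some 1}"
      using assms(1) by (simp add: valid_learner_def p_def)
    ultimately show ?thesis by auto
  qed
  have card_all: "card {t. t < n \<and> Q t} = n" if "\<And>t. t < n \<Longrightarrow> Q t" for Q
    using that by (metis (mono_tags, lifting) card_lessThan lessThan_def Collect_cong)
  show ?thesis
    unfolding nontrivial_rounds_def length_play_fresh_points by (rule card_all[OF nontrivial])
qed

theorem mainTheorem2:
  fixes d :: nat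
  shows "\<exists>(X :: nat set) (H :: hyp set). hyp_class X H \<and> ldim_eq X H d \<and>
    (\<forall>k l :: nat. k < l + d \<longrightarrow>
      (\<forall>m :: nat. \<exists>(ax :: adv_x) (ay :: adv_y).
         (\<forall>L. valid_learner L \<longrightarrow> (\<forall>n.
             (\<forall>t<length (play ax ay L n). fst (play ax ay L n ! t) \<in> X) \<and>
             l_bias X H l (labels_of (play ax ay L n)))) \<and>
         (\<forall>L. valid_learner L \<and> guarantees X H l k L \<longrightarrow>
             (\<exists>n. nontrivial_rounds (play ax ay L n) \<ge> m + 1))))"
proof (intro exI conjI allI impI)
  show "hyp_class UNIV (corr_class UNIV d)" by (rule hyp_class_corr_class)
  show "ldim_eq UNIV (corr_class UNIV d) d" by (rule ldim_eq_corr_class)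
  fix k l m L
  let ?ay = "refute_positive (d + l)"
  show "l_bias UNIV (corr_class UNIV d) l (labels_of (play fresh_points ?ay L n))" for n
    by (rule l_bias_play_refute_positive)
  assume "k < l + d" and L: "valid_learner L \<and> guarantees UNIV (corr_class UNIV d) l k L"
  then have "mistakes L (labels_of (play fresh_points ?ay L n)) < d + l" for n
    using l_bias_play_refute_positive[of d l L n] unfolding guarantees_def by fastforce
  then show "m + 1 \<le> nontrivial_rounds (play fresh_points ?ay L (m + 1))"
    using L nontrivial_rounds_play_refute_positive by (metis order_refl)
qed (rule UNIV_I)

end
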